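(* Let $\beta\in[0,1)$ and let $U:\mathbb{R}^d\to\mathbb{R}$ be twice continuously differentiable with $\nabla U(0)=0$ and $\sup_x\|\mathrm{D}^2U(x)\|\le\mathtt{L}$. Assume there exist $\mathtt{m}_\beta>0$, $\mathtt{L}_\beta,\mathtt{K}_\beta\ge0$ with $\frac{\mathtt{L}_\beta}{1+\|x\|^{3\beta/4}}\ge\mathrm{D}^2U(x)[y,y]\ge\frac{\mathtt{m}_\beta}{1+\|x\|^\beta}$ for all $\|x\|\ge\mathtt{K}_\beta$, $\|y\|=1$. Let $\tilde{\mathtt{K}}_\beta=[4\mathtt{K}_\beta(1+\mathtt{L}/\mathtt{m}_\beta)]\vee[4\mathtt{K}_\beta(1+\mathtt{L}/\mathtt{m}_\beta)]^{1/(1-\beta)}$ and $\tilde{\mathtt{C}}_\beta=\mathtt{L}\tilde{\mathtt{K}}_\beta^2$. Then for all $x\in\mathbb{R}^d$, $$\langle\nabla U(x),x\rangle\ge\frac{(\mathtt{m}_\beta/2)\|x\|^2}{1+\|x\|^\beta}-\tilde{\mathtt{C}}_\beta\mathbb{1}_{B(0,\tilde{\mathtt{K}}_\beta)}(x).$$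
   Context: $B(0,K)=\{x\in\mathbb{R}^d:\|x\|<K\}$. *)

theory Defs
  imports "HOL-Analysis.Analysis"
begin

text \<open>Real power r^a for r \<ge> 0 with the usual convention r^0 = 1 (also for r = 0);
  Isabelle's powr has 0 powr 0 = 0, which we avoid.\<close>
definition rpow :: "real \<Rightarrow> real \<Rightarrow> real" where
  "rpow r a = (if a = 0 then 1 else r powr a)"

end

theory Submission
  imports Defs
begin

(* Along the ray t |-> t x the function t |-> <grad U(t x), x> vanishes at 0 and has derivative
  D^2U(t x)[x, x], which is at least -L |x|^2 everywhere and at least m |x|^2 / (1 + |x|^beta)
  once |t x| >= K.  Integrating gives <grad U(x), x> >= m (|x|^2 - K |x|) / (1 + |x|^beta) - L K |x|
  for |x| >= K.  Beyond Kt the loss L K |x| is at most half of the gain; inside the ball of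
  radius Kt the deficit is at most L Kt^2, since the curvature bound m / (1 + K^beta) cannot
  exceed the Hessian bound L. *)

lemma increment_ge_of_DERIV_ge:
  fixes g g' :: "real \<Rightarrow> real"
  assumes "a \<le> b" and deriv: "\<And>t. DERIV g t :> g' t" and "\<And>t. a \<le> t \<Longrightarrow> t \<le> b \<Longrightarrow> c \<le> g' t"
  shows "c * (b - a) \<le> g b - g a"
proof (cases "a = b")
  case False
  with \<open>a \<le> b\<close> have "a < b" by simp
  from MVT2[OF this deriv] obtain z where "a < z" "z < b" "g b - g a = (b - a) * g' z"
    by blast
  with assms(3)[of z] \<open>a < b\<close> show ?thesis
    by (simp add: mult_left_mono mult.commute)
qed simp

lemma has_real_derivative_inner_along_ray:
  fixes F :: "'a::real_inner \<Rightarrow> 'a"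
  assumes "(F has_derivative blinfun_apply H) (at (t *\<^sub>R x))"
  shows "((\<lambda>t. F (t *\<^sub>R x) \<bullet> x) has_real_derivative H x \<bullet> x) (at t)"
proof -
  have "((\<lambda>t. t *\<^sub>R x) has_derivative (\<lambda>h. h *\<^sub>R x)) (at t)"
    by (auto intro!: derivative_eq_intros)
  from has_derivative_inner_left[OF has_derivative_compose[OF this assms]]
  have "((\<lambda>t. F (t *\<^sub>R x) \<bullet> x) has_derivative (\<lambda>h. H (h *\<^sub>R x) \<bullet> x)) (at t)" .
  moreover have "(\<lambda>h. H (h *\<^sub>R x) \<bullet> x) = (\<lambda>h. (H x \<bullet> x) * h)"
    by (auto simp: blinfun.scaleR_right)
  ultimately show ?thesis by (simp add: has_field_derivative_def)
qed

lemma abs_inner_blinfun_le: "\<bar>H x \<bullet> x\<bar> \<le> norm H * (norm x)\<^sup>2"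
  for H :: "'a::real_inner \<Rightarrow>\<^sub>L 'a"
proof -
  have "\<bar>H x \<bullet> x\<bar> \<le> norm (H x) * norm x" by (rule Cauchy_Schwarz_ineq2)
  also have "\<dots> \<le> norm H * norm x * norm x" by (simp add: mult_right_mono norm_blinfun)
  finally show ?thesis by (simp add: power2_eq_square mult.assoc)
qed

lemma inner_blinfun_ge_of_unit:
  fixes H :: "'a::real_inner \<Rightarrow>\<^sub>L 'a"
  assumes "\<And>y. norm y = 1 \<Longrightarrow> c \<le> y \<bullet> H y"
  shows "c * (norm x)\<^sup>2 \<le> H x \<bullet> x"
proof (cases "x = 0")
  case False
  define y where "y = x /\<^sub>R norm x"
  have "norm y = 1" using False by (simp add: y_def)
  have "H x \<bullet> x = (norm x)\<^sup>2 * (y \<bullet> H y)"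
  proof -
    have "x = norm x *\<^sub>R y" using False by (simp add: y_def)
    then have "H x \<bullet> x = (norm x *\<^sub>R H y) \<bullet> (norm x *\<^sub>R y)"
      by (metis blinfun.scaleR_right)
    then show ?thesis by (simp add: power2_eq_square inner_commute)
  qed
  with assms[OF \<open>norm y = 1\<close>] show ?thesis
    by (metis mult.commute mult_right_mono zero_le_power2)
qed simp

lemma inner_blinfun_ge_neg_norm:
  fixes H :: "'a::real_inner \<Rightarrow>\<^sub>L 'a"
  assumes "norm H \<le> L"
  shows "- L * (norm x)\<^sup>2 \<le> H x \<bullet> x"
proof -
  have "norm H * (norm x)\<^sup>2 \<le> L * (norm x)\<^sup>2"
    using assms by (simp add: mult_right_mono)
  with abs_inner_blinfun_le[of H x] show ?thesis by linarith
qed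

lemma inner_gradient_ge_two_pieces:
  fixes gradU :: "'a::real_inner \<Rightarrow> 'a" and hessU :: "'a \<Rightarrow> 'a \<Rightarrow>\<^sub>L 'a"
  assumes hess: "\<And>z. (gradU has_derivative blinfun_apply (hessU z)) (at z)"
    and grad0: "gradU 0 = 0" and hess_bound: "\<And>z. norm (hessU z) \<le> L"
    and s: "0 \<le> s" "s \<le> 1"
    and hess_lower: "\<And>t. s \<le> t \<Longrightarrow> t \<le> 1 \<Longrightarrow> c \<le> hessU (t *\<^sub>R x) x \<bullet> x"
  shows "- L * (norm x)\<^sup>2 * s + c * (1 - s) \<le> gradU x \<bullet> x"
proof -
  define g where "g t = gradU (t *\<^sub>R x) \<bullet> x" for t
  have deriv: "DERIV g t :> hessU (t *\<^sub>R x) x \<bullet> x" for t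
    unfolding g_def by (rule has_real_derivative_inner_along_ray[OF hess])
  have "- L * (norm x)\<^sup>2 \<le> hessU z x \<bullet> x" for z
    using inner_blinfun_ge_neg_norm[OF hess_bound] .
  then have "- L * (norm x)\<^sup>2 * (s - 0) \<le> g s - g 0"
    using increment_ge_of_DERIV_ge[OF s(1) deriv] by blast
  moreover have "c * (1 - s) \<le> g 1 - g s"
    using increment_ge_of_DERIV_ge[OF s(2) deriv] hess_lower by blast
  ultimately show ?thesis by (simp add: g_def grad0)
qed

lemma rpow_nonneg: "0 \<le> rpow r a"
  by (simp add: rpow_def)

lemma rpow_mono: "0 \<le> a \<Longrightarrow> 0 \<le> r \<Longrightarrow> r \<le> s \<Longrightarrow> rpow r a \<le> rpow s a"
  by (simp add: rpow_def powr_mono2)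

lemma powr_le_max_self_powr:
  fixes x :: real
  assumes "0 \<le> x" "1 \<le> a" "a \<le> b"
  shows "x powr a \<le> max x (x powr b)"
proof (cases "x \<le> 1")
  case True
  then have "x powr a \<le> x"
    using assms by (cases "x = 0") (auto intro: powr_le_one_le)
  then show ?thesis by simp
next
  case False
  then have "x powr a \<le> x powr b" using assms by (simp add: powr_mono)
  then show ?thesis by simp
qed

lemma mult_rpow_le_of_ge_max_powr:
  fixes A r \<beta> :: real
  assumes beta: "0 \<le> \<beta>" "\<beta> < 1" and "0 \<le> A" and r: "max A (A powr (1 / (1 - \<beta>))) \<le> r"
  shows "A * rpow r \<beta> \<le> r"
proof (cases "\<beta> = 0 \<or> A = 0")
  case True
  then show ?thesis using r \<open>0 \<le> A\<close> by (auto simp: rpow_def)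
next
  case False
  then have "0 < A" "0 < r" using \<open>0 \<le> A\<close> r by auto
  have "A = (A powr (1 / (1 - \<beta>))) powr (1 - \<beta>)"
    using beta \<open>0 < A\<close> by (simp add: powr_powr)
  also have "\<dots> \<le> r powr (1 - \<beta>)"
    using beta r by (intro powr_mono2) auto
  finally have "A * r powr \<beta> \<le> r powr (1 - \<beta>) * r powr \<beta>"
    by (simp add: mult_right_mono)
  also have "\<dots> = r"
    using \<open>0 < r\<close> by (simp flip: powr_add)
  finally show ?thesis using False by (simp add: rpow_def)
qed

locale weakly_convex_outside_ball =
  fixes gradU :: "'a::euclidean_space \<Rightarrow> 'a" and hessU :: "'a \<Rightarrow> 'a \<Rightarrow>\<^sub>L 'a"
    and \<beta> L m K Kt :: real
  assumes beta: "0 \<le> \<beta>" "\<beta> < 1"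
    and hess: "\<And>x. (gradU has_derivative blinfun_apply (hessU x)) (at x)"
    and grad0: "gradU 0 = 0"
    and hess_bound: "\<And>x. norm (hessU x) \<le> L"
    and m_pos: "0 < m" and K_nonneg: "0 \<le> K"
    and curv: "\<And>x y. K \<le> norm x \<Longrightarrow> norm y = 1 \<Longrightarrow> m / (1 + rpow (norm x) \<beta>) \<le> y \<bullet> hessU x y"
    and Kt_eq: "Kt = max (4 * K * (1 + L / m)) ((4 * K * (1 + L / m)) powr (1 / (1 - \<beta>)))"
begin

lemma L_nonneg: "0 \<le> L"
  using hess_bound[of 0] norm_ge_zero order_trans by blast

lemma four_K_le_threshold: "4 * K \<le> 4 * K * (1 + L / m)"
  using K_nonneg L_nonneg m_pos by (simp add: mult_le_cancel_left1)

lemma four_K_le_Kt: "4 * K \<le> Kt"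
  using four_K_le_threshold by (simp add: Kt_eq)

lemma K_sq_rpow_le_Kt_sq: "K\<^sup>2 * rpow K \<beta> \<le> Kt\<^sup>2"
proof (cases "K = 0")
  case False
  define K\<^sub>1 where "K\<^sub>1 = 4 * K * (1 + L / m)"
  have "K \<le> K\<^sub>1" using four_K_le_threshold K_nonneg by (simp add: K\<^sub>1_def)
  have "1 + \<beta> \<le> 1 / (1 - \<beta>)"
    using beta by (simp add: le_divide_eq algebra_simps)
  then have "K powr (1 + \<beta>) \<le> K\<^sub>1 powr (1 + \<beta>)"
    using K_nonneg beta \<open>K \<le> K\<^sub>1\<close> by (intro powr_mono2) auto
  also have "\<dots> \<le> Kt"
    using powr_le_max_self_powr \<open>1 + \<beta> \<le> 1 / (1 - \<beta>)\<close> beta K_nonneg \<open>K \<le> K\<^sub>1\<close>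
    unfolding Kt_eq K\<^sub>1_def by simp
  finally have "K * K powr (1 + \<beta>) \<le> Kt * Kt"
    using four_K_le_Kt K_nonneg by (intro mult_mono) auto
  moreover have "K * K powr (1 + \<beta>) = K\<^sup>2 * rpow K \<beta>"
    using False K_nonneg by (simp add: rpow_def powr_add power2_eq_square)
  ultimately show ?thesis by (simp add: power2_eq_square)
qed simp

lemma curvature_le_L: "K \<le> s \<Longrightarrow> m / (1 + rpow s \<beta>) \<le> L"
proof -
  assume "K \<le> s"
  then have "0 \<le> s" using K_nonneg by linarith
  then obtain z :: 'a where "norm z = s"
    using vector_choose_size by blast
  obtain y :: 'a where "norm y = 1"
    using vector_choose_size[OF zero_le_one] by blast
  have "m / (1 + rpow s \<beta>) \<le> y \<bullet> hessU z y"
    using curv[of z y] \<open>norm z = s\<close> \<open>norm y = 1\<close> \<open>K \<le> s\<close> by simp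
  also have "\<dots> \<le> L"
    using abs_inner_blinfun_le[of "hessU z" y] hess_bound[of z] \<open>norm y = 1\<close>
    by (simp add: inner_commute abs_le_iff)
  finally show ?thesis .
qed

lemma hessian_form_ge:
  assumes "K \<le> norm z"
  shows "m * (norm x)\<^sup>2 / (1 + rpow (norm z) \<beta>) \<le> hessU z x \<bullet> x"
  using inner_blinfun_ge_of_unit[of "m / (1 + rpow (norm z) \<beta>)" "hessU z" x] curv[OF assms]
  by simp

lemma inner_gradient_ge_neg: "- L * (norm x)\<^sup>2 \<le> gradU x \<bullet> x"
  using inner_gradient_ge_two_pieces[OF hess grad0 hess_bound, of 1 "- L * (norm x)\<^sup>2" x]
    inner_blinfun_ge_neg_norm[OF hess_bound]
  by simp

lemma inner_gradient_ge_outside: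
  assumes "K \<le> norm x"
  shows "m * ((norm x)\<^sup>2 - K * norm x) / (1 + rpow (norm x) \<beta>) - L * K * norm x
    \<le> gradU x \<bullet> x"
proof (cases "x = 0")
  case True
  then show ?thesis using grad0 assms by simp
next
  case False
  define r where "r = norm x"
  have "0 < r" using False by (simp add: r_def)
  define s where "s = K / r"
  have "0 \<le> s" "s \<le> 1" using assms K_nonneg \<open>0 < r\<close> by (auto simp: s_def r_def)
  have "m * r\<^sup>2 / (1 + rpow r \<beta>) \<le> hessU (t *\<^sub>R x) x \<bullet> x" if "s \<le> t" "t \<le> 1" for t
  proof -
    have "0 \<le> t" using that \<open>0 \<le> s\<close> by linarith
    then have "norm (t *\<^sub>R x) = t * r" by (simp add: r_def)
    have "K \<le> t * r" using that(1) \<open>0 < r\<close> by (simp add: s_def pos_divide_le_eq)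
    have "rpow (t * r) \<beta> \<le> rpow r \<beta>"
      using beta \<open>0 \<le> t\<close> \<open>t \<le> 1\<close> \<open>0 < r\<close> by (intro rpow_mono) (auto simp: mult_left_le_one_le)
    then have "m * r\<^sup>2 / (1 + rpow r \<beta>) \<le> m * r\<^sup>2 / (1 + rpow (t * r) \<beta>)"
      using m_pos rpow_nonneg[of "t * r" \<beta>] by (intro divide_left_mono) auto
    also have "\<dots> = m * (norm x)\<^sup>2 / (1 + rpow (norm (t *\<^sub>R x)) \<beta>)"
      using \<open>0 \<le> t\<close> by (simp add: r_def)
    also have "\<dots> \<le> hessU (t *\<^sub>R x) x \<bullet> x"
      by (rule hessian_form_ge) (use \<open>K \<le> t * r\<close> \<open>norm (t *\<^sub>R x) = t * r\<close> in simp)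
    finally show ?thesis .
  qed
  from inner_gradient_ge_two_pieces[OF hess grad0 hess_bound \<open>0 \<le> s\<close> \<open>s \<le> 1\<close> this]
  have "- L * r\<^sup>2 * s + m * r\<^sup>2 / (1 + rpow r \<beta>) * (1 - s) \<le> gradU x \<bullet> x"
    by (simp add: r_def)
  moreover have "- L * r\<^sup>2 * s = - (L * K * r)"
    and "m * r\<^sup>2 / (1 + rpow r \<beta>) * (1 - s) = m * (r\<^sup>2 - K * r) / (1 + rpow r \<beta>)"
    using \<open>0 < r\<close> rpow_nonneg[of r \<beta>]
    by (simp_all add: s_def power2_eq_square field_simps add_nonneg_eq_0_iff)
  ultimately show ?thesis
    unfolding r_def[symmetric] by linarith
qed

lemma inner_gradient_ge_far:
  assumes "Kt \<le> norm x"
  shows "m / 2 * (norm x)\<^sup>2 / (1 + rpow (norm x) \<beta>) \<le> gradU x \<bullet> x"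
proof -
  define r p where "r = norm x" and "p = rpow (norm x) \<beta>"
  have "0 \<le> p" by (simp add: p_def rpow_nonneg)
  have "0 \<le> r" by (simp add: r_def)
  have "K \<le> r" using assms four_K_le_Kt K_nonneg by (simp add: r_def)
  have "4 * K * (1 + L / m) * p \<le> r" "4 * K * (1 + L / m) \<le> r"
    using mult_rpow_le_of_ge_max_powr[OF beta _ assms[unfolded Kt_eq]] assms
      four_K_le_threshold K_nonneg
    by (simp_all add: Kt_eq r_def p_def)
  then have "4 * K * (1 + L / m) * (1 + p) \<le> 2 * r"
    by (simp only: distrib_left mult_1_right)
  then have "m * (4 * K * (1 + L / m) * (1 + p)) \<le> m * (2 * r)"
    by (rule mult_left_mono) (use m_pos in simp)
  moreover have "m * (4 * K * (1 + L / m) * (1 + p)) = 4 * K * (m + L) * (1 + p)"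
    using m_pos by (simp add: field_simps)
  ultimately have "4 * K * (m + L) * (1 + p) \<le> 2 * (m * r)"
    by simp
  then have "r * (4 * K * (m + L) * (1 + p)) \<le> r * (2 * (m * r))"
    using \<open>0 \<le> r\<close> by (rule mult_left_mono)
  moreover have "0 \<le> m * K * r * p"
    using m_pos K_nonneg \<open>0 \<le> r\<close> \<open>0 \<le> p\<close> by simp
  ultimately have "m / 2 * r\<^sup>2 \<le> - L * K * r * (1 + p) + m * (r\<^sup>2 - K * r)"
    by (simp add: algebra_simps power2_eq_square)
  then have "m / 2 * r\<^sup>2 / (1 + p) \<le> (- L * K * r * (1 + p) + m * (r\<^sup>2 - K * r)) / (1 + p)"
    using \<open>0 \<le> p\<close> by (intro divide_right_mono) simp_all
  also have "\<dots> = m * (r\<^sup>2 - K * r) / (1 + p) - L * K * r"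
    using \<open>0 \<le> p\<close> by (simp add: field_simps)
  also have "\<dots> \<le> gradU x \<bullet> x"
    using inner_gradient_ge_outside \<open>K \<le> r\<close> by (simp add: r_def p_def)
  finally show ?thesis by (simp add: r_def p_def)
qed

lemma inner_gradient_ge_middle:
  assumes "K \<le> norm x" "norm x \<le> Kt"
  shows "m / 2 * (norm x)\<^sup>2 / (1 + rpow (norm x) \<beta>) - L * Kt\<^sup>2 \<le> gradU x \<bullet> x"
proof -
  define r where "r = norm x"
  define q where "q = m / (1 + rpow r \<beta>)"
  have "0 \<le> q" using m_pos rpow_nonneg[of r \<beta>] by (simp add: q_def)
  have "q \<le> L" using curvature_le_L assms(1) by (simp add: q_def r_def)
  have "m * (r\<^sup>2 - K * r) / (1 + rpow r \<beta>) - L * K * r \<le> gradU x \<bullet> x"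
    using inner_gradient_ge_outside[OF assms(1), folded r_def] .
  moreover have "m * (r\<^sup>2 - K * r) / (1 + rpow r \<beta>) = q * (r\<^sup>2 - K * r)"
    by (simp add: q_def)
  moreover have "q * r\<^sup>2 / 2 - q * K\<^sup>2 / 2 \<le> q * (r\<^sup>2 - K * r)"
  proof -
    have "0 \<le> q * (r - K)\<^sup>2 / 2" using \<open>0 \<le> q\<close> by simp
    then show ?thesis by (simp add: power2_eq_square algebra_simps)
  qed
  moreover have "q * K\<^sup>2 \<le> L * K\<^sup>2"
    using \<open>q \<le> L\<close> by (simp add: mult_right_mono)
  moreover have "L * K * r \<le> L * K * Kt"
    using assms(2) K_nonneg L_nonneg by (simp add: r_def mult_left_mono)
  moreover have "L * K\<^sup>2 / 2 + L * K * Kt \<le> L * Kt\<^sup>2"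
  proof -
    have "(4 * K) * Kt \<le> Kt * Kt"
      using four_K_le_Kt K_nonneg by (intro mult_right_mono) auto
    moreover have "(4 * K) * (4 * K) \<le> Kt * Kt"
      using four_K_le_Kt K_nonneg by (intro mult_mono) auto
    ultimately have "4 * (K * Kt) \<le> Kt * Kt" "16 * (K * K) \<le> Kt * Kt"
      by (simp_all add: algebra_simps)
    then have "K\<^sup>2 / 2 + K * Kt \<le> Kt\<^sup>2"
      using mult_nonneg_nonneg[OF K_nonneg K_nonneg] unfolding power2_eq_square by linarith
    then have "L * (K\<^sup>2 / 2 + K * Kt) \<le> L * Kt\<^sup>2"
      using L_nonneg by (rule mult_left_mono)
    then show ?thesis by (simp add: algebra_simps)
  qed
  moreover have "m / 2 * r\<^sup>2 / (1 + rpow r \<beta>) = q * r\<^sup>2 / 2"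
    by (simp add: q_def)
  ultimately show ?thesis
    unfolding r_def[symmetric] by linarith
qed

lemma inner_gradient_ge_near:
  assumes "norm x \<le> K"
  shows "m / 2 * (norm x)\<^sup>2 / (1 + rpow (norm x) \<beta>) - L * Kt\<^sup>2 \<le> gradU x \<bullet> x"
proof -
  define r k where "r = norm x" and "k = rpow K \<beta>"
  have "0 \<le> k" by (simp add: k_def rpow_nonneg)
  have "m \<le> L * (1 + k)"
    using curvature_le_L[of K] \<open>0 \<le> k\<close> by (simp add: k_def divide_le_eq)
  have "r\<^sup>2 \<le> K\<^sup>2"
    using assms by (simp add: r_def power_mono)
  have "m / 2 * r\<^sup>2 / (1 + rpow r \<beta>) \<le> m / 2 * r\<^sup>2 / 1"
    using m_pos rpow_nonneg[of r \<beta>] by (intro divide_left_mono) auto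
  also have "\<dots> \<le> m / 2 * K\<^sup>2"
    using \<open>r\<^sup>2 \<le> K\<^sup>2\<close> m_pos by simp
  also have "\<dots> \<le> L * (1 + k) / 2 * K\<^sup>2"
    using \<open>m \<le> L * (1 + k)\<close> by (simp add: mult_right_mono)
  also have "\<dots> = L * (K\<^sup>2 / 2 + K\<^sup>2 * k / 2)"
    by (simp add: algebra_simps)
  also have "\<dots> \<le> L * (Kt\<^sup>2 - K\<^sup>2)"
  proof (rule mult_left_mono[OF _ L_nonneg])
    have "16 * K\<^sup>2 \<le> Kt\<^sup>2"
      using power_mono[OF four_K_le_Kt, of 2] K_nonneg by (simp add: power_mult_distrib)
    then show "K\<^sup>2 / 2 + K\<^sup>2 * k / 2 \<le> Kt\<^sup>2 - K\<^sup>2"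
      using K_sq_rpow_le_Kt_sq[folded k_def] zero_le_power2[of K] by linarith
  qed
  also have "\<dots> \<le> L * (Kt\<^sup>2 - r\<^sup>2)"
    using \<open>r\<^sup>2 \<le> K\<^sup>2\<close> L_nonneg by (simp add: mult_left_mono)
  finally show ?thesis
    using inner_gradient_ge_neg[of x] by (simp add: r_def algebra_simps)
qed

lemma inner_gradient_ge:
  "m / 2 * (norm x)\<^sup>2 / (1 + rpow (norm x) \<beta>) - L * Kt\<^sup>2 * indicator (ball 0 Kt) x
    \<le> gradU x \<bullet> x"
proof (cases "norm x < Kt")
  case True
  then have "m / 2 * (norm x)\<^sup>2 / (1 + rpow (norm x) \<beta>) - L * Kt\<^sup>2 \<le> gradU x \<bullet> x"
    using inner_gradient_ge_near inner_gradient_ge_middle by (cases "norm x \<le> K") auto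
  with True show ?thesis by simp
next
  case False
  with inner_gradient_ge_far show ?thesis by simp
qed

end

theorem lemma11:
  fixes U :: "'a::euclidean_space \<Rightarrow> real"
    and gradU :: "'a \<Rightarrow> 'a"
    and hessU :: "'a \<Rightarrow> ('a \<Rightarrow>\<^sub>L 'a)"
    and x :: 'a
    and \<beta> L m\<^sub>\<beta> L\<^sub>\<beta> K\<^sub>\<beta> :: real
  assumes beta: "0 \<le> \<beta>" "\<beta> < 1"
    and grad: "\<And>x. (U has_derivative (\<lambda>h. gradU x \<bullet> h)) (at x)"
    and hess: "\<And>x. (gradU has_derivative blinfun_apply (hessU x)) (at x)"
    and hess_cont: "continuous_on UNIV hessU"
    and grad0: "gradU 0 = 0"
    and hess_bound: "\<And>x. norm (hessU x) \<le> L"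
    and m_pos: "m\<^sub>\<beta> > 0" and L_nonneg: "L\<^sub>\<beta> \<ge> 0" and K_nonneg: "K\<^sub>\<beta> \<ge> 0"
    and curv: "\<And>x y. norm x \<ge> K\<^sub>\<beta> \<Longrightarrow> norm y = 1 \<Longrightarrow>
        L\<^sub>\<beta> / (1 + rpow (norm x) (3 * \<beta> / 4)) \<ge> y \<bullet> hessU x y \<and>
        y \<bullet> hessU x y \<ge> m\<^sub>\<beta> / (1 + rpow (norm x) \<beta>)"
  defines "Kt \<equiv> max (4 * K\<^sub>\<beta> * (1 + L / m\<^sub>\<beta>)) ((4 * K\<^sub>\<beta> * (1 + L / m\<^sub>\<beta>)) powr (1 / (1 - \<beta>)))"
    and "Ct \<equiv> L * (max (4 * K\<^sub>\<beta> * (1 + L / m\<^sub>\<beta>)) ((4 * K\<^sub>\<beta> * (1 + L / m\<^sub>\<beta>)) powr (1 / (1 - \<beta>))))\<^sup>2"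
  shows "gradU x \<bullet> x \<ge>
      (m\<^sub>\<beta> / 2) * (norm x)\<^sup>2 / (1 + rpow (norm x) \<beta>) - Ct * indicator (ball 0 Kt) x"
proof -
  interpret weakly_convex_outside_ball gradU hessU \<beta> L "m\<^sub>\<beta>" "K\<^sub>\<beta>" Kt
    using beta hess grad0 hess_bound m_pos K_nonneg curv Kt_def by unfold_locales auto
  have "Ct = L * Kt\<^sup>2" unfolding Ct_def Kt_def ..
  with inner_gradient_ge[of x] show ?thesis by simp
qed

end
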